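(* Let $X,Y\subseteq\Sigma^*$. If there exists $k\in\mathbb{N}$ such that for every $x\in X$ there exists $y\in Y$ with $\mathrm{ed}(x,y)<k$, and for every $y\in Y$ there exists $x\in X$ with $\mathrm{ed}(x,y)<k$, then $D(X,Y)=0$ for every $D\in\{\mathrm{AH}_{\mathrm{ned}},\mathrm{AH}_{\mathrm{ged}},\mathrm{AH}_{\mathrm{ced}}\}$.
   Context: $\Sigma$ is a finite alphabet. An edit path from $x$ to $y$ is a sequence $p=(a_1,b_1)\cdots(a_n,b_n)$ with $(a_i,b_i)\in(\Sigma\cup\{\varepsilon\})^2\setminus\{(\varepsilon,\varepsilon)\}$, $a_1\cdots a_n=x$, $b_1\cdots b_n=y$; $|p|=n$, $\mathrm{wgt}(p)=|\{i:a_i\ne b_i\}|$. $\mathrm{ed}(x,y)=\min_p\mathrm{wgt}(p)$ (Levenshtein distance); $\mathrm{ned}(x,y)=\min_p\mathrm{wgt}(p)/|p|$ ($\mathrm{ned}(\varepsilon,\varepsilon)=0$); $\mathrm{ged}(x,y)=\frac{2\mathrm{ed}(x,y)}{|x|+|y|+\mathrm{ed}(x,y)}$ ($0$ if $x=y=\varepsilon$); $\mathrm{ced}(x,y)$ is the minimum, over sequences $x=u_0,\dots,u_k=y$ with $\mathrm{ed}(u_{i-1},u_i)=1$, of $\sum_{i=1}^k1/\max(|u_{i-1}|,|u_i|)$. For a word distance $d$: $\overrightarrow{\mathrm{AH}}_{d}(X,Y)=\lim_{k\to\infty}\sup_{x\in X,|x|\ge k}\inf_{y\in Y}d(x,y)$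 (empty supremum $=0$) and $\mathrm{AH}_d(X,Y)=\max\{\overrightarrow{\mathrm{AH}}_{d}(X,Y),\overrightarrow{\mathrm{AH}}_{d}(Y,X)\}$. *)

theory Defs
  imports "HOL-Analysis.Analysis"
begin

text \<open>Words over a finite alphabet 'a (class finite) are lists. An edit step is a pair of
  optional letters (None = epsilon), not both None.\<close>

fun opt_word :: "'a option \<Rightarrow> 'a list" where
  "opt_word None = []"
| "opt_word (Some c) = [c]"

definition edit_path :: "'a list \<Rightarrow> 'a list \<Rightarrow> ('a option \<times> 'a option) list \<Rightarrow> bool" where
  "edit_path x y p \<longleftrightarrow>
     (\<forall>e\<in>set p. e \<noteq> (None, None)) \<and>
     concat (map (\<lambda>e. opt_word (fst e)) p) = x \<and>
     concat (map (\<lambda>e. opt_word (snd e)) p) = y"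

definition wgt :: "('a option \<times> 'a option) list \<Rightarrow> nat" where
  "wgt p = length (filter (\<lambda>e. fst e \<noteq> snd e) p)"

definition ed :: "'a::finite list \<Rightarrow> 'a list \<Rightarrow> nat" where
  "ed x y = Inf {wgt p | p. edit_path x y p}"

definition ned :: "'a::finite list \<Rightarrow> 'a list \<Rightarrow> real" where
  "ned x y = (if x = [] \<and> y = [] then 0
              else Inf {real (wgt p) / real (length p) | p. edit_path x y p})"

definition ged :: "'a::finite list \<Rightarrow> 'a list \<Rightarrow> real" where
  "ged x y = (if x = [] \<and> y = [] then 0
              else 2 * real (ed x y) / (real (length x) + real (length y) + real (ed x y)))"

definition ced :: "'a::finite list \<Rightarrow> 'a list \<Rightarrow> real" where
  "ced x y = Inf {(\<Sum>i<length us - 1.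
                     1 / real (max (length (us ! i)) (length (us ! Suc i)))) | us.
                  us \<noteq> [] \<and> hd us = x \<and> last us = y \<and>
                  (\<forall>i < length us - 1. ed (us ! i) (us ! Suc i) = 1)}"

text \<open>Directed asymptotic Hausdorff distance (values in extended reals; the empty
  supremum is 0, the empty infimum is +infinity).\<close>
definition dirAH :: "('b list \<Rightarrow> 'b list \<Rightarrow> real) \<Rightarrow> 'b list set \<Rightarrow> 'b list set \<Rightarrow> ereal" where
  "dirAH d X Y = lim (\<lambda>k::nat.
      (let S = {(INF y\<in>Y. ereal (d x y)) | x. x \<in> X \<and> length x \<ge> k}
       in if S = {} then 0 else Sup S))"

definition AH :: "('b list \<Rightarrow> 'b list \<Rightarrow> real) \<Rightarrow> 'b list set \<Rightarrow> 'b list set \<Rightarrow> ereal" where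
  "AH d X Y = max (dirAH d X Y) (dirAH d Y X)"

end

theory Submission
  imports Defs
begin

text \<open>If every word of one set is within edit distance \<open>k\<close> of the other set, then a long
  word \<open>x\<close> is at normalised distance \<open>O(k / |x|)\<close> from the other set for all three
  normalisations: an optimal edit path from \<open>x\<close> has length at least \<open>|x|\<close> (for \<open>ned\<close>),
  \<open>ged\<close> has \<open>|x|\<close> in its denominator, and performing the edits of an optimal path one at a
  time passes through \<open>ed x y\<close> words of length at least \<open>|x| - ed x y\<close> (for \<open>ced\<close>).
  So the suprema in the asymptotic Hausdorff distance tend to 0.\<close>

definition path_src :: "('a option \<times> 'a option) list \<Rightarrow> 'a list" where
  "path_src p = concat (map (\<lambda>e. opt_word (fst e)) p)"

definition path_tgt :: "('a option \<times> 'a option) list \<Rightarrow> 'a list" where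
  "path_tgt p = concat (map (\<lambda>e. opt_word (snd e)) p)"

lemma path_src_simps [simp]:
  "path_src [] = []"
  "path_src (e # p) = opt_word (fst e) @ path_src p"
  "path_src (p @ q) = path_src p @ path_src q"
  by (simp_all add: path_src_def)

lemma path_tgt_simps [simp]:
  "path_tgt [] = []"
  "path_tgt (e # p) = opt_word (snd e) @ path_tgt p"
  "path_tgt (p @ q) = path_tgt p @ path_tgt q"
  by (simp_all add: path_tgt_def)

lemma wgt_simps [simp]:
  "wgt [] = 0"
  "wgt (e # p) = (if fst e = snd e then wgt p else Suc (wgt p))"
  "wgt (p @ q) = wgt p + wgt q"
  by (simp_all add: wgt_def)

lemma edit_path_iff:
  "edit_path x y p \<longleftrightarrow> (\<forall>e\<in>set p. e \<noteq> (None, None)) \<and> path_src p = x \<and> path_tgt p = y"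
  by (simp add: edit_path_def path_src_def path_tgt_def)

lemma length_opt_word_le: "length (opt_word a) \<le> 1"
  by (cases a) auto

lemma opt_word_eq_iff: "opt_word a = opt_word b \<longleftrightarrow> a = b"
  by (cases a; cases b) auto

lemma length_path_src_le: "length (path_src p) \<le> length p"
proof (induction p)
  case (Cons e p)
  then show ?case using length_opt_word_le[of "fst e"] by simp
qed simp

lemma path_src_eq_tgt_if_wgt_0: "wgt p = 0 \<Longrightarrow> path_src p = path_tgt p"
  by (induction p) (auto split: if_splits)

definition copy_path :: "'a list \<Rightarrow> ('a option \<times> 'a option) list" where
  "copy_path w = map (\<lambda>c. (Some c, Some c)) w"

lemma edit_path_copy_path: "edit_path w w (copy_path w)"
  by (induction w) (auto simp: edit_path_iff copy_path_def)

lemma wgt_copy_path [simp]: "wgt (copy_path w) = 0"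
  by (induction w) (auto simp: copy_path_def)

lemma edit_path_exists: "\<exists>p. edit_path x y p"
proof -
  have "path_src (map (\<lambda>c. (Some c, None)) x) = x" "path_tgt (map (\<lambda>c. (Some c, None)) x) = []"
    "path_src (map (\<lambda>c. (None, Some c)) y) = []" "path_tgt (map (\<lambda>c. (None, Some c)) y) = y"
    by (induction x; induction y; simp)+
  then have "edit_path x y (map (\<lambda>c. (Some c, None)) x @ map (\<lambda>c. (None, Some c)) y)"
    by (auto simp: edit_path_iff)
  then show ?thesis ..
qed

lemma edit_path_swap: "edit_path x y p \<Longrightarrow> edit_path y x (map prod.swap p)"
proof -
  have "path_src (map prod.swap p) = path_tgt p" "path_tgt (map prod.swap p) = path_src p"
    by (induction p) auto
  then show "edit_path x y p \<Longrightarrow> ?thesis" by (auto simp: edit_path_iff)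
qed

lemma wgt_swap [simp]: "wgt (map prod.swap p) = wgt p"
  by (induction p) auto

lemma ed_optimal_path:
  obtains p where "edit_path x y p" "wgt p = ed x y"
proof -
  have "{wgt p | p. edit_path x y p} \<noteq> {}" using edit_path_exists by blast
  from Inf_nat_def1[OF this] show ?thesis using that unfolding ed_def by auto
qed

lemma ed_le_wgt: "edit_path x y p \<Longrightarrow> ed x y \<le> wgt p"
  unfolding ed_def by (rule cInf_lower) auto

lemma ed_eq_0_iff: "ed x y = 0 \<longleftrightarrow> x = y"
proof
  assume "ed x y = 0"
  then show "x = y"
    by (metis ed_optimal_path edit_path_iff path_src_eq_tgt_if_wgt_0)
next
  assume "x = y"
  then show "ed x y = 0"
    using ed_le_wgt[OF edit_path_copy_path] by simp
qed

lemma ed_commute: "ed x y = ed y x"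
  by (metis ed_le_wgt ed_optimal_path edit_path_swap wgt_swap le_antisym)

lemma ed_append_left_le: "ed (w @ u) (w @ v) \<le> ed u v"
proof -
  obtain p where p: "edit_path u v p" "wgt p = ed u v"
    by (rule ed_optimal_path)
  have "edit_path (w @ u) (w @ v) (copy_path w @ p)"
    using p(1) edit_path_copy_path[of w] by (auto simp: edit_path_iff)
  then show ?thesis
    using ed_le_wgt p(2) by fastforce
qed

lemma ed_append_left_eq_1: "ed u v = 1 \<Longrightarrow> ed (w @ u) (w @ v) = 1"
  using ed_append_left_le[of w u v] ed_eq_0_iff[of u v] ed_eq_0_iff[of "w @ u" "w @ v"] by auto

lemma ed_single_edit: "a \<noteq> b \<Longrightarrow> ed (opt_word a @ s) (opt_word b @ s) = 1"
proof -
  assume "a \<noteq> b"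
  then have "edit_path (opt_word a @ s) (opt_word b @ s) ((a, b) # copy_path s)"
    using edit_path_copy_path[of s] by (auto simp: edit_path_iff)
  then have "ed (opt_word a @ s) (opt_word b @ s) \<le> 1"
    using ed_le_wgt \<open>a \<noteq> b\<close> by fastforce
  moreover have "opt_word a @ s \<noteq> opt_word b @ s"
    using \<open>a \<noteq> b\<close> by (simp add: opt_word_eq_iff)
  ultimately show ?thesis
    using ed_eq_0_iff by (metis le_neq_implies_less less_one)
qed

text \<open>The words passed through when the non-trivial edits of a path are performed one at a time,
  from left to right.\<close>

fun edit_trace :: "('a option \<times> 'a option) list \<Rightarrow> 'a list list" where
  "edit_trace [] = [[]]"
| "edit_trace (e # p) =
     (if fst e = snd e then map ((@) (opt_word (fst e))) (edit_trace p)
      else (opt_word (fst e) @ path_src p) # map ((@) (opt_word (snd e))) (edit_trace p))"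

lemma edit_trace_not_Nil [simp]: "edit_trace p \<noteq> []"
  by (induction p) auto

lemma hd_edit_trace: "hd (edit_trace p) = path_src p"
  by (induction p) (auto simp: hd_map)

lemma last_edit_trace: "last (edit_trace p) = path_tgt p"
  by (induction p) (auto simp: last_map)

lemma length_edit_trace: "length (edit_trace p) = Suc (wgt p)"
  by (induction p) auto

lemma edit_trace_steps: "successively (\<lambda>u v. ed u v = 1) (edit_trace p)"
proof (induction p)
  case (Cons e p)
  have "successively (\<lambda>u v. ed u v = 1) (map ((@) w) (edit_trace p))" for w
    unfolding successively_map using Cons.IH by (rule successively_mono) (rule ed_append_left_eq_1)
  then show ?case
    using ed_single_edit[of "fst e" "snd e" "path_src p"]
    by (auto simp: successively_Cons hd_map hd_edit_trace)
qed simp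

lemma length_edit_trace_word:
  "w \<in> set (edit_trace p) \<Longrightarrow> length (path_src p) \<le> length w + wgt p"
proof (induction p arbitrary: w)
  case (Cons e p)
  then show ?case using length_opt_word_le[of "fst e"] by (force split: if_splits)
qed simp

definition chain_cost :: "'a list list \<Rightarrow> real" where
  "chain_cost us = (\<Sum>i<length us - 1. 1 / real (max (length (us ! i)) (length (us ! Suc i))))"

lemma chain_cost_nonneg: "0 \<le> chain_cost us"
  unfolding chain_cost_def by (intro sum_nonneg) auto

lemma ced_conv_successively: "ced x y = Inf {chain_cost us | us.
    us \<noteq> [] \<and> hd us = x \<and> last us = y \<and> successively (\<lambda>u v. ed u v = 1) us}"
proof -
  have "(\<forall>i < length us - 1. ed (us ! i) (us ! Suc i) = 1) \<longleftrightarrow>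
      successively (\<lambda>u v. ed u v = 1) us" for us :: "'a list list"
    by (auto simp: successively_conv_nth)
  then show ?thesis
    unfolding ced_def chain_cost_def by presburger
qed

lemma ced_le_chain_cost:
  assumes "us \<noteq> []" "hd us = x" "last us = y" "successively (\<lambda>u v. ed u v = 1) us"
  shows "ced x y \<le> chain_cost us"
  unfolding ced_conv_successively
  by (rule cInf_lower) (use assms in \<open>auto intro!: bdd_belowI[of _ 0] chain_cost_nonneg\<close>)

lemma ced_nonneg: "0 \<le> ced x y"
  unfolding ced_conv_successively
proof (rule cInf_greatest)
  obtain p where "edit_path x y p" using edit_path_exists by blast
  then have "edit_trace p \<noteq> [] \<and> hd (edit_trace p) = x \<and> last (edit_trace p) = y \<and>
      successively (\<lambda>u v. ed u v = 1) (edit_trace p)"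
    using edit_trace_steps[of p] by (simp add: edit_path_iff hd_edit_trace last_edit_trace)
  then show "{chain_cost us | us. us \<noteq> [] \<and> hd us = x \<and> last us = y \<and>
      successively (\<lambda>u v. ed u v = 1) us} \<noteq> {}"
    by blast
qed (auto intro: chain_cost_nonneg)

lemma ced_le_ed: "ed x y < length x \<Longrightarrow> ced x y \<le> ed x y / (real (length x) - ed x y)"
proof -
  assume short: "ed x y < length x"
  obtain p where p: "edit_path x y p" "wgt p = ed x y"
    by (rule ed_optimal_path)
  define us where "us = edit_trace p"
  have step: "1 / real (max (length (us ! i)) (length (us ! Suc i))) \<le> 1 / (real (length x) - ed x y)"
    if "i < length us - 1" for i
  proof -
    have "length x \<le> length (us ! i) + ed x y"
      using that p length_edit_trace_word[of "us ! i" p] by (auto simp: us_def edit_path_iff)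
    then show ?thesis
      using short by (intro divide_left_mono) auto
  qed
  have "ced x y \<le> chain_cost us"
    using p(1) edit_trace_steps[of p]
    by (intro ced_le_chain_cost) (auto simp: us_def edit_path_iff hd_edit_trace last_edit_trace)
  also have "\<dots> \<le> (\<Sum>i<length us - 1. 1 / (real (length x) - ed x y))"
    unfolding chain_cost_def using step by (intro sum_mono) auto
  also have "\<dots> = ed x y / (real (length x) - ed x y)"
    using p(2) by (simp add: us_def length_edit_trace)
  finally show ?thesis .
qed

lemma ned_nonneg: "0 \<le> ned x y"
  unfolding ned_def using edit_path_exists[of x y] by (auto intro: cInf_greatest)

lemma ned_le_ed: "x \<noteq> [] \<Longrightarrow> ned x y \<le> ed x y / length x"
proof -
  assume "x \<noteq> []"
  obtain p where p: "edit_path x y p" "wgt p = ed x y"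
    by (rule ed_optimal_path)
  have "ned x y \<le> wgt p / length p"
    unfolding ned_def using \<open>x \<noteq> []\<close> p(1)
    by (auto intro!: cInf_lower bdd_belowI[of _ 0])
  also have "\<dots> \<le> ed x y / length x"
  proof -
    have "length x \<le> length p"
      using p(1) length_path_src_le[of p] by (simp add: edit_path_iff)
    then show ?thesis
      using p(2) \<open>x \<noteq> []\<close> by (simp add: frac_le)
  qed
  finally show ?thesis .
qed

lemma ged_nonneg: "0 \<le> ged x y"
  unfolding ged_def by simp

lemma ged_le_ed: "x \<noteq> [] \<Longrightarrow> ged x y \<le> 2 * ed x y / length x"
  unfolding ged_def by (simp add: frac_le)

lemma ced_le_twice_ed: "2 * ed x y < length x \<Longrightarrow> ced x y \<le> 2 * ed x y / length x"
proof -
  assume short: "2 * ed x y < length x"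
  have "ed x y / (real (length x) - ed x y) \<le> 2 * ed x y / length x"
  proof -
    have "real (ed x y) * (2 * ed x y) \<le> real (ed x y) * length x"
      using short by (intro mult_left_mono) auto
    moreover have "0 < real (length x) - ed x y" "0 < real (length x)"
      using short by auto
    ultimately show ?thesis
      by (simp add: field_simps)
  qed
  with ced_le_ed[of x y] short show ?thesis by simp
qed

lemma dirAH_eq_0_if_le_const_over_length:
  fixes d :: "'b list \<Rightarrow> 'b list \<Rightarrow> real"
  assumes nonneg: "\<And>x y. 0 \<le> d x y" and "0 \<le> C"
    and bound: "\<And>x. x \<in> X \<Longrightarrow> N \<le> length x \<Longrightarrow> \<exists>y\<in>Y. d x y \<le> C / length x"
  shows "dirAH d X Y = 0"
proof -
  define S where "S k = {(INF y\<in>Y. ereal (d x y)) | x. x \<in> X \<and> k \<le> length x}" for k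
  define f where "f k = (if S k = {} then 0 else Sup (S k))" for k
  have f_nonneg: "0 \<le> f k" for k
  proof -
    have "0 \<le> (INF y\<in>Y. ereal (d x y))" for x
      by (rule INF_greatest) (simp add: nonneg)
    then show ?thesis
      unfolding f_def S_def by (auto intro: order.trans[OF _ Sup_upper])
  qed
  have f_le: "f k \<le> ereal (C / k)" if "N \<le> k" "0 < k" for k
  proof -
    have "(INF y\<in>Y. ereal (d x y)) \<le> ereal (C / k)" if "x \<in> X" "k \<le> length x" for x
    proof -
      obtain y where "y \<in> Y" "d x y \<le> C / length x"
        using bound \<open>x \<in> X\<close> \<open>N \<le> k\<close> \<open>k \<le> length x\<close> by fastforce
      have "(INF y\<in>Y. ereal (d x y)) \<le> ereal (d x y)"
        using \<open>y \<in> Y\<close> by (rule INF_lower)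
      also have "\<dots> \<le> ereal (C / k)"
        using \<open>d x y \<le> C / length x\<close> \<open>0 \<le> C\<close> \<open>0 < k\<close> \<open>k \<le> length x\<close>
        by (simp add: order_trans[OF _ frac_le])
      finally show ?thesis .
    qed
    then show ?thesis
      unfolding f_def S_def using \<open>0 \<le> C\<close> by (auto intro!: Sup_least)
  qed
  have "eventually (\<lambda>k. 0 \<le> f k) sequentially"
    using f_nonneg by simp
  moreover have "eventually (\<lambda>k. f k \<le> ereal (C / k)) sequentially"
    using f_le eventually_ge_at_top[of "max N 1"] by (auto elim: eventually_mono)
  moreover have "(\<lambda>k. ereal (C / real k)) \<longlonglongrightarrow> 0"
    using tendsto_ereal[OF lim_const_over_n[of C]] by (simp add: zero_ereal_def)
  ultimately have "f \<longlonglongrightarrow> 0"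
    by (rule tendsto_sandwich[OF _ _ tendsto_const])
  then show ?thesis
    unfolding dirAH_def f_def S_def Let_def by (rule limI)
qed

lemma dirAH_eq_0_if_ed_close:
  fixes d :: "'a::finite list \<Rightarrow> 'a list \<Rightarrow> real"
  assumes nonneg: "\<And>x y. 0 \<le> d x y"
    and bound: "\<And>x y. 2 * ed x y < length x \<Longrightarrow> d x y \<le> 2 * ed x y / length x"
    and close: "\<forall>x\<in>X. \<exists>y\<in>Y. ed x y < k"
  shows "dirAH d X Y = 0"
proof (rule dirAH_eq_0_if_le_const_over_length[OF nonneg, of "2 * real k" X "2 * k"])
  fix x assume "x \<in> X" "2 * k \<le> length x"
  then obtain y where "y \<in> Y" "ed x y < k"
    using close by blast
  then have "d x y \<le> 2 * ed x y / length x"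
    using \<open>2 * k \<le> length x\<close> by (intro bound) simp
  also have "\<dots> \<le> 2 * real k / length x"
    using \<open>ed x y < k\<close> by (simp add: divide_right_mono)
  finally show "\<exists>y\<in>Y. d x y \<le> 2 * real k / length x"
    using \<open>y \<in> Y\<close> by blast
qed simp

lemma AH_eq_0_if_ed_close:
  fixes d :: "'a::finite list \<Rightarrow> 'a list \<Rightarrow> real"
  assumes "\<And>x y. 0 \<le> d x y"
    and "\<And>x y. 2 * ed x y < length x \<Longrightarrow> d x y \<le> 2 * ed x y / length x"
    and "(\<forall>x\<in>X. \<exists>y\<in>Y. ed x y < k) \<and> (\<forall>y\<in>Y. \<exists>x\<in>X. ed x y < k)"
  shows "AH d X Y = 0"
  using dirAH_eq_0_if_ed_close[OF assms(1,2), of X Y k]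
    dirAH_eq_0_if_ed_close[OF assms(1,2), of Y X k] assms(3)
  by (simp add: AH_def ed_commute)

theorem mainTheorem8:
  fixes X Y :: "'a::finite list set"
  assumes "\<exists>k::nat. (\<forall>x\<in>X. \<exists>y\<in>Y. ed x y < k) \<and> (\<forall>y\<in>Y. \<exists>x\<in>X. ed x y < k)"
  shows "AH ned X Y = 0 \<and> AH ged X Y = 0 \<and> AH ced X Y = 0"
proof -
  obtain k :: nat where close: "(\<forall>x\<in>X. \<exists>y\<in>Y. ed x y < k) \<and> (\<forall>y\<in>Y. \<exists>x\<in>X. ed x y < k)"
    using assms by blast
  have ned_bound: "ned x y \<le> 2 * ed x y / length x" if "2 * ed x y < length x" for x y :: "'a list"
  proof -
    have "ned x y \<le> ed x y / length x"
      using that by (intro ned_le_ed) auto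
    also have "\<dots> \<le> 2 * ed x y / length x"
      by (simp add: divide_right_mono)
    finally show ?thesis .
  qed
  have ged_bound: "ged x y \<le> 2 * ed x y / length x" if "2 * ed x y < length x" for x y :: "'a list"
    using that by (intro ged_le_ed) auto
  show ?thesis
    using AH_eq_0_if_ed_close[OF ned_nonneg ned_bound close]
      AH_eq_0_if_ed_close[OF ged_nonneg ged_bound close]
      AH_eq_0_if_ed_close[OF ced_nonneg ced_le_twice_ed close]
    by blast
qed

end
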